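(* In the FAVANO process, assume each $\nabla f_i$ is $L$-Lipschitz, the stochastic gradients have bounded variance $\sigma^2$, and $\eta<\frac{1}{4LK^2}$. Then for every local step $q\in\{1,\dots,K\}$, client $i$ and time step $t\ge0$, $$\mathbb{E}\|\widetilde h^i_{t+1,q}\|^2\le\sigma^2+B^i_t,\qquad B^i_t:=\frac{\sigma^2}{K^2}+16L^2\,\mathbb{E}\|w^i_t-\mu_t\|^2+8\,\mathbb{E}\|\nabla f_i(\mu_t)\|^2 .$$
   Context: FAVANO process. Fix integers $n\ge1$, $1\le s\le n$, $K\ge1$, $d\ge1$, a step size $\eta>0$ and differentiable $f_1,\dots,f_n:\mathbb{R}^d\to\mathbb{R}$, $f=\frac1n\sum_i f_i$. All random variables live on one probability space. For each client $i$ a stochastic gradient oracle returns, at a query point $x$, $\widetilde g^i(x)=\nabla f_i(x)+\xi$ where, conditionally on everything generated before the query (including $x$), $\xi$ has mean zero (each query uses fresh noise). Initialize $w_0\in\mathbb{R}^d$ deterministic and $w_0^i=w_0$ for all $i$. For each $t\ge1$, each client $i$ and each $q\ge1$ define recursively $\widetilde h^i_{t,q}=\widetilde g^i\big(w^i_{t-1}-\eta\sum_{r=1}^{q-1}\widetilde h^i_{t,r}\big)$ and $h^i_{t,q}=\nabla f_i\big(w^i_{t-1}-\eta\sum_{r=1}^{q-1}\widetilde h^i_{t,r}\big)$. At each $t\ge1$ there are random integers $E^1_t,\dots,E^n_t\ge0$ with $\mathbf{P}(E^i_t>0)>0$, and a random subset $\mathcal{S}_t\subseteq\{1,\dots,n\}$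 uniformly distributed among subsets of size $s$; the family $(\mathcal S_t,E^1_t,\dots,E^n_t)$ is independent of all the other randomness (the past up to time $t-1$ and all $\widetilde h^i_{t,q}$), and $\mathcal S_t$ is independent of $(E^i_t)_i$. The weight $\alpha^i_t$ is either $\mathbf{P}(E^i_t>0)\,(E^i_t\wedge K)$ (stochastic version) or $\mathbb{E}[E^i_t\wedge K]$ (deterministic version), where $a\wedge b=\min(a,b)$. Set $\check h^i_t=\frac{1}{\alpha^i_t}\sum_{q=1}^{E^i_t\wedge K}\widetilde h^i_{t,q}$ if $E^i_t>0$ and $\check h^i_t=0$ otherwise. Updates: $w_t=\frac{1}{s+1}\big(w_{t-1}+\sum_{i\in\mathcal S_t}(w^i_{t-1}-\eta\check h^i_t)\big)$; $w^i_t=w_t$ for $i\in\mathcal S_t$ and $w^i_t=w^i_{t-1}$ for $i\notin\mathcal S_t$. Define $\mu_t=\frac{1}{n+1}\big(w_t+\sum_{i=1}^n w^i_t\big)$. All expectations appearing are assumed finite. Smoothness: $\|\nabla f_i(x)-\nabla f_i(y)\|\le L\|x-y\|$ for all $i,x,y$, with $L>0$. Bounded variance: conditionally on everything generated before a query at $x$, $\mathbb{E}\|\widetilde g^i(x)-\nabla f_i(x)\|^2\le\sigma^2$. *)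

theory Defs
  imports "HOL-Probability.Probability"
begin

definition rv_events :: "'a measure \<Rightarrow> 'b measure \<Rightarrow> ('a \<Rightarrow> 'b) \<Rightarrow> 'a set set" where
  "rv_events M N X = {X -` B \<inter> space M | B. B \<in> sets N}"

text \<open>Generator of the past of the FAVANO process up to time t-1:
  the sampled client sets S r, the numbers of local steps E r j and all stochastic
  gradients ht r j q, for 1 <= r < t, clients j in 1..n, local steps q >= 1.
  (w_0 is deterministic, so all models up to time t-1 are functions of these.)\<close>
definition past_gen ::
  "'a measure \<Rightarrow> nat \<Rightarrow> (nat \<Rightarrow> 'a \<Rightarrow> nat set) \<Rightarrow> (nat \<Rightarrow> nat \<Rightarrow> 'a \<Rightarrow> nat)
    \<Rightarrow> (nat \<Rightarrow> nat \<Rightarrow> nat \<Rightarrow> 'a \<Rightarrow> 'v::euclidean_space) \<Rightarrow> nat \<Rightarrow> 'a set set" where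
  "past_gen M n S E ht t =
     (\<Union>r\<in>{1..<t}. rv_events M (count_space UNIV) (S r))
   \<union> (\<Union>r\<in>{1..<t}. \<Union>j\<in>{1..n}. rv_events M (count_space UNIV) (E r j))
   \<union> (\<Union>r\<in>{1..<t}. \<Union>j\<in>{1..n}. \<Union>q\<in>{1..}. rv_events M borel (ht r j q))"

definition query_sigma ::
  "'a measure \<Rightarrow> nat \<Rightarrow> (nat \<Rightarrow> 'a \<Rightarrow> nat set) \<Rightarrow> (nat \<Rightarrow> nat \<Rightarrow> 'a \<Rightarrow> nat)
    \<Rightarrow> (nat \<Rightarrow> nat \<Rightarrow> nat \<Rightarrow> 'a \<Rightarrow> 'v::euclidean_space) \<Rightarrow> nat \<Rightarrow> nat \<Rightarrow> nat \<Rightarrow> 'a measure" where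
  "query_sigma M n S E ht t i q =
     sigma (space M) (past_gen M n S E ht t \<union> (\<Union>r\<in>{1..<q}. rv_events M borel (ht t i r)))"

definition qpt ::
  "real \<Rightarrow> (nat \<Rightarrow> nat \<Rightarrow> 'a \<Rightarrow> 'v::euclidean_space) \<Rightarrow> (nat \<Rightarrow> nat \<Rightarrow> nat \<Rightarrow> 'a \<Rightarrow> 'v)
    \<Rightarrow> nat \<Rightarrow> nat \<Rightarrow> nat \<Rightarrow> 'a \<Rightarrow> 'v" where
  "qpt eta wl ht t i q \<omega> = wl i (t - 1) \<omega> - eta *\<^sub>R (\<Sum>r\<in>{1..<q}. ht t i r \<omega>)"

definition checkh ::
  "nat \<Rightarrow> (nat \<Rightarrow> nat \<Rightarrow> 'a \<Rightarrow> real) \<Rightarrow> (nat \<Rightarrow> nat \<Rightarrow> 'a \<Rightarrow> nat)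
    \<Rightarrow> (nat \<Rightarrow> nat \<Rightarrow> nat \<Rightarrow> 'a \<Rightarrow> 'v::euclidean_space) \<Rightarrow> nat \<Rightarrow> nat \<Rightarrow> 'a \<Rightarrow> 'v" where
  "checkh K alpha E ht t i \<omega> =
     (if E t i \<omega> > 0 then (1 / alpha t i \<omega>) *\<^sub>R (\<Sum>q\<in>{1..min (E t i \<omega>) K}. ht t i q \<omega>) else 0)"

definition mu ::
  "nat \<Rightarrow> (nat \<Rightarrow> 'a \<Rightarrow> 'v::euclidean_space) \<Rightarrow> (nat \<Rightarrow> nat \<Rightarrow> 'a \<Rightarrow> 'v) \<Rightarrow> nat \<Rightarrow> 'a \<Rightarrow> 'v" where
  "mu n w wl t \<omega> = (1 / real (n + 1)) *\<^sub>R (w t \<omega> + (\<Sum>i\<in>{1..n}. wl i t \<omega>))"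

end

(*
  Write the answer of the oracle as h_q = g(x_q) + xi_q, where x_q is the query point and g the
  true gradient of client i. The query point is a function of the past and of h_1, ..., h_(q-1),
  so g(x_q) is measurable for the sigma-algebra of the query while xi_q has conditional mean zero;
  hence E|h_q|^2 = E|xi_q|^2 + E|g(x_q)|^2 <= sigma^2 + E|g(x_q)|^2. By the Lipschitz bound,
  |g(x_q)| <= |g(mu_t)| + L |w^i_t - mu_t| + L eta |h_1 + ... + h_(q-1)|, and strong induction
  on q closes because eta L K^2 < 1/4 makes the recursive contribution at most 3/16 of the bound.
*)
theory Submission
  imports Defs
begin

lemma measurable_sigma_of_rv_events:
  assumes "X \<in> measurable M N" "rv_events M N X \<subseteq> G" "G \<subseteq> Pow (space M)"
  shows "X \<in> measurable (sigma (space M) G) N"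
proof (rule measurableI)
  fix x assume "x \<in> space (sigma (space M) G)"
  then show "X x \<in> space N"
    using assms(1,3) by (simp add: measurable_space)
next
  fix A assume "A \<in> sets N"
  then have "X -` A \<inter> space M \<in> G"
    using assms(2) unfolding rv_events_def by blast
  then show "X -` A \<inter> space (sigma (space M) G) \<in> sets (sigma (space M) G)"
    using assms(3) by (auto intro: sigma_sets.Basic)
qed

lemma rv_events_subset_sets: "X \<in> measurable M N \<Longrightarrow> rv_events M N X \<subseteq> sets M"
  unfolding rv_events_def by (auto intro: measurable_sets)

lemma subalgebra_sigma:
  assumes "G \<subseteq> sets M" shows "subalgebra M (sigma (space M) G)"
proof -
  have "G \<subseteq> Pow (space M)" using assms sets.sets_into_space by blast
  then show ?thesis
    unfolding subalgebra_def using assms by (simp add: sets.sigma_sets_subset)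
qed

lemma checkh_measurable:
  assumes "E t i \<in> measurable F (count_space UNIV)" "alpha t i \<in> borel_measurable F"
    and "\<And>q. 1 \<le> q \<Longrightarrow> ht t i q \<in> borel_measurable F"
  shows "checkh K alpha E ht t i \<in> borel_measurable F"
proof -
  have "(\<lambda>\<omega>. (\<lambda>k \<omega>. if 0 < k then (1 / alpha t i \<omega>) *\<^sub>R (\<Sum>q\<in>{1..min k K}. ht t i q \<omega>) else 0)
      (E t i \<omega>) \<omega>) \<in> borel_measurable F"
  proof (rule measurable_compose_countable[OF _ assms(1)])
    fix k :: nat
    show "(\<lambda>\<omega>. if 0 < k then (1 / alpha t i \<omega>) *\<^sub>R (\<Sum>q\<in>{1..min k K}. ht t i q \<omega>) else 0)
      \<in> borel_measurable F"
      by (cases "0 < k") (auto intro!: borel_measurable_scaleR borel_measurable_divide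
          borel_measurable_sum assms(2,3))
  qed
  then show ?thesis
    unfolding checkh_def[abs_def] by simp
qed

lemma sets_Collect_mem_measurable:
  assumes "X \<in> measurable F (count_space UNIV)"
  shows "{\<omega> \<in> space F. j \<in> X \<omega>} \<in> sets F"
proof -
  have "{\<omega> \<in> space F. j \<in> X \<omega>} = X -` {A. j \<in> A} \<inter> space F" by auto
  then show ?thesis using measurable_sets[OF assms, of "{A. j \<in> A}"] by simp
qed

lemma integrable_norm_sq_diff:
  fixes X Y :: "'a \<Rightarrow> 'v::euclidean_space"
  assumes "X \<in> borel_measurable M" "Y \<in> borel_measurable M"
    and "integrable M (\<lambda>\<omega>. (norm (X \<omega>))\<^sup>2)" "integrable M (\<lambda>\<omega>. (norm (Y \<omega>))\<^sup>2)"
  shows "integrable M (\<lambda>\<omega>. (norm (X \<omega> - Y \<omega>))\<^sup>2)"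
proof (rule Bochner_Integration.integrable_bound)
  show "integrable M (\<lambda>\<omega>. 2 * (norm (X \<omega>))\<^sup>2 + 2 * (norm (Y \<omega>))\<^sup>2)"
    using assms(3,4) by simp
  show "(\<lambda>\<omega>. (norm (X \<omega> - Y \<omega>))\<^sup>2) \<in> borel_measurable M"
    using assms(1,2) by simp
  show "AE \<omega> in M. norm ((norm (X \<omega> - Y \<omega>))\<^sup>2) \<le> norm (2 * (norm (X \<omega>))\<^sup>2 + 2 * (norm (Y \<omega>))\<^sup>2)"
  proof (rule AE_I2)
    fix \<omega>
    have "(norm (X \<omega> - Y \<omega>))\<^sup>2 \<le> (norm (X \<omega>) + norm (Y \<omega>))\<^sup>2"
      by (simp add: norm_triangle_ineq4 power_mono)
    also have "\<dots> \<le> 2 * (norm (X \<omega>))\<^sup>2 + 2 * (norm (Y \<omega>))\<^sup>2"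
      using sum_squares_bound[of "norm (X \<omega>)" "norm (Y \<omega>)"] by (simp add: power2_sum)
    finally show "norm ((norm (X \<omega> - Y \<omega>))\<^sup>2) \<le> norm (2 * (norm (X \<omega>))\<^sup>2 + 2 * (norm (Y \<omega>))\<^sup>2)"
      by simp
  qed
qed

lemma square_sum3_le: "((a::real) + b + c)\<^sup>2 \<le> 3 * a\<^sup>2 + 3 * b\<^sup>2 + 3 * c\<^sup>2"
proof -
  have "0 \<le> (a - b)\<^sup>2 + (b - c)\<^sup>2 + (a - c)\<^sup>2" by simp
  then show ?thesis by (simp add: power2_eq_square algebra_simps)
qed

lemma norm_sq_lipschitz_perturbed_le:
  fixes g :: "'v::real_normed_vector \<Rightarrow> 'w::real_normed_vector" and h :: "'i \<Rightarrow> 'v"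
  assumes lip: "\<And>x y. norm (g x - g y) \<le> L * norm (x - y)" and L: "0 \<le> L" and eta: "0 \<le> eta"
  shows "(norm (g (x - eta *\<^sub>R (\<Sum>r\<in>R. h r))))\<^sup>2
    \<le> 3 * L\<^sup>2 * (norm (x - y))\<^sup>2 + 3 * L\<^sup>2 * eta\<^sup>2 * (card R * (\<Sum>r\<in>R. (norm (h r))\<^sup>2))
      + 3 * (norm (g y))\<^sup>2"
proof -
  let ?a = "norm (x - y)" and ?c = "norm (\<Sum>r\<in>R. h r)"
  have "norm (x - eta *\<^sub>R (\<Sum>r\<in>R. h r) - y) \<le> ?a + eta * ?c"
    using norm_triangle_ineq4[of "x - y" "eta *\<^sub>R (\<Sum>r\<in>R. h r)"] eta
    by (simp add: algebra_simps)
  then have "norm (g (x - eta *\<^sub>R (\<Sum>r\<in>R. h r)) - g y) \<le> L * ?a + L * eta * ?c"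
    using lip[of "x - eta *\<^sub>R (\<Sum>r\<in>R. h r)" y] mult_left_mono[OF _ L]
    by (fastforce simp: algebra_simps)
  then have "norm (g (x - eta *\<^sub>R (\<Sum>r\<in>R. h r))) \<le> L * ?a + L * eta * ?c + norm (g y)"
    using norm_triangle_sub[of "g (x - eta *\<^sub>R (\<Sum>r\<in>R. h r))" "g y"] by simp
  then have "(norm (g (x - eta *\<^sub>R (\<Sum>r\<in>R. h r))))\<^sup>2 \<le> (L * ?a + L * eta * ?c + norm (g y))\<^sup>2"
    by (simp add: power_mono)
  also have "\<dots> \<le> 3 * L\<^sup>2 * ?a\<^sup>2 + 3 * L\<^sup>2 * eta\<^sup>2 * ?c\<^sup>2 + 3 * (norm (g y))\<^sup>2"
    using square_sum3_le[of "L * ?a" "L * eta * ?c" "norm (g y)"] by (simp add: power_mult_distrib)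
  also have "?c\<^sup>2 \<le> card R * (\<Sum>r\<in>R. (norm (h r))\<^sup>2)"
  proof -
    have "?c\<^sup>2 \<le> (\<Sum>r\<in>R. norm (h r))\<^sup>2"
      by (simp add: norm_sum power_mono)
    also have "\<dots> \<le> card R * (\<Sum>r\<in>R. (norm (h r))\<^sup>2)"
      using sum_squared_le_sum_of_squares[of "\<lambda>r. norm (h r)" R] by (simp add: mult.commute)
    finally show ?thesis .
  qed
  finally show ?thesis
    by (simp add: mult_left_mono)
qed

lemma step_size_closes_recursion:
  fixes K L eta D G v m B :: real
  assumes K: "1 \<le> K" and L: "0 < L" and eta: "0 \<le> eta" and eta_small: "eta < 1 / (4 * L * K\<^sup>2)"
    and D: "0 \<le> D" and G: "0 \<le> G" and v: "0 \<le> v" and m: "0 \<le> m" "m \<le> K"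
    and B: "v / K\<^sup>2 + 16 * L\<^sup>2 * D + 8 * G \<le> B"
  shows "3 * L\<^sup>2 * D + 3 * L\<^sup>2 * eta\<^sup>2 * (m * (m * (v + B))) + 3 * G \<le> B"
proof -
  have "L * eta * K * K < 1 / 4"
    using eta_small L K by (simp add: field_simps power2_eq_square)
  then have "L * eta * K < 1 / (4 * K)"
    using K by (simp add: field_simps)
  moreover have "L * eta * m \<le> L * eta * K"
    by (rule mult_left_mono) (use m L eta in auto)
  ultimately have "L * eta * m \<le> 1 / (4 * K)"
    by linarith
  then have "(L * eta * m)\<^sup>2 \<le> (1 / (4 * K))\<^sup>2"
    using L eta m by (intro power_mono) auto
  then have e: "L\<^sup>2 * eta\<^sup>2 * (m * m) \<le> 1 / (16 * K\<^sup>2)"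
    by (simp add: power_mult_distrib power2_eq_square field_simps)
  have B0: "0 \<le> B"
    using B D G v by (auto intro: order_trans[OF _ B])
  have "B / K\<^sup>2 \<le> B / 1"
    by (rule divide_left_mono) (use K B0 in \<open>auto simp: one_le_power\<close>)
  then have BK: "(v + B) / (16 * K\<^sup>2) \<le> v / (16 * K\<^sup>2) + B / 16"
    by (simp add: add_divide_distrib)
  have "L\<^sup>2 * eta\<^sup>2 * (m * (m * (v + B))) \<le> (v + B) / (16 * K\<^sup>2)"
    using mult_right_mono[OF e, of "v + B"] B0 v by (simp add: field_simps)
  also note BK
  finally have "L\<^sup>2 * eta\<^sup>2 * (m * (m * (v + B))) \<le> v / K\<^sup>2 / 16 + B / 16"
    by simp
  moreover have "0 \<le> v / K\<^sup>2" "0 \<le> L\<^sup>2 * D"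
    using v D by simp_all
  moreover have "\<And>X a u. X \<le> u / 16 + B / 16 \<Longrightarrow> 0 \<le> u \<Longrightarrow> 0 \<le> a \<Longrightarrow>
      u + 16 * a + 8 * G \<le> B \<Longrightarrow> 3 * a + 3 * X + 3 * G \<le> B"
    using G by linarith
  ultimately show ?thesis
    using B unfolding mult.assoc by blast
qed

context prob_space
begin

lemma integral_inner_cond_mean_zero:
  fixes Y Z :: "'a \<Rightarrow> 'v::euclidean_space"
  assumes Q: "subalgebra M Q" and Y: "Y \<in> borel_measurable Q" and Z: "Z \<in> borel_measurable M"
    and int_Y: "integrable M (\<lambda>\<omega>. (norm (Y \<omega>))\<^sup>2)" and int_Z: "integrable M (\<lambda>\<omega>. (norm (Z \<omega>))\<^sup>2)"
    and mean: "\<And>b. b \<in> Basis \<Longrightarrow> AE \<omega> in M. real_cond_exp M Q (\<lambda>\<omega>. Z \<omega> \<bullet> b) \<omega> = 0"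
  shows "(\<integral>\<omega>. Y \<omega> \<bullet> Z \<omega> \<partial>M) = 0"
proof -
  interpret finite_measure_subalgebra M Q
    by unfold_locales (rule Q)
  have Y_M: "Y \<in> borel_measurable M" by (rule measurable_from_subalg[OF Q Y])
  have int_coord: "integrable M (\<lambda>\<omega>. (Y \<omega> \<bullet> b) * (Z \<omega> \<bullet> b))" if "b \<in> Basis" for b
  proof (rule Bochner_Integration.integrable_bound)
    show "integrable M (\<lambda>\<omega>. (norm (Y \<omega>))\<^sup>2 + (norm (Z \<omega>))\<^sup>2)"
      using int_Y int_Z by simp
    show "(\<lambda>\<omega>. (Y \<omega> \<bullet> b) * (Z \<omega> \<bullet> b)) \<in> borel_measurable M"
      using Y_M Z by simp
    show "AE \<omega> in M. norm ((Y \<omega> \<bullet> b) * (Z \<omega> \<bullet> b)) \<le> norm ((norm (Y \<omega>))\<^sup>2 + (norm (Z \<omega>))\<^sup>2)"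
    proof (rule AE_I2)
      fix \<omega>
      have "\<bar>Y \<omega> \<bullet> b\<bar> * \<bar>Z \<omega> \<bullet> b\<bar> \<le> norm (Y \<omega>) * norm (Z \<omega>)"
        using that by (intro mult_mono Basis_le_norm) auto
      also have "\<dots> \<le> (norm (Y \<omega>))\<^sup>2 + (norm (Z \<omega>))\<^sup>2"
        using sum_squares_bound[of "norm (Y \<omega>)" "norm (Z \<omega>)"]
          mult_nonneg_nonneg[OF norm_ge_zero norm_ge_zero, of "Y \<omega>" "Z \<omega>"] by linarith
      finally show "norm ((Y \<omega> \<bullet> b) * (Z \<omega> \<bullet> b)) \<le> norm ((norm (Y \<omega>))\<^sup>2 + (norm (Z \<omega>))\<^sup>2)"
        by (simp add: abs_mult)
    qed
  qed
  have "(\<integral>\<omega>. (Y \<omega> \<bullet> b) * (Z \<omega> \<bullet> b) \<partial>M) = 0" if b: "b \<in> Basis" for b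
  proof -
    have "(\<integral>\<omega>. (Y \<omega> \<bullet> b) * (Z \<omega> \<bullet> b) \<partial>M)
        = (\<integral>\<omega>. (Y \<omega> \<bullet> b) * real_cond_exp M Q (\<lambda>\<omega>. Z \<omega> \<bullet> b) \<omega> \<partial>M)"
    proof (rule real_cond_exp_intg(2)[symmetric])
      show "(\<lambda>\<omega>. Y \<omega> \<bullet> b) \<in> borel_measurable Q"
        using Y by simp
      show "(\<lambda>\<omega>. Z \<omega> \<bullet> b) \<in> borel_measurable M"
        using Z by simp
    qed (rule int_coord[OF b])
    also have "\<dots> = 0"
      using mean[OF b] by (intro integral_eq_zero_AE) (auto elim: AE_mp)
    finally show ?thesis .
  qed
  moreover have "(\<lambda>\<omega>. Y \<omega> \<bullet> Z \<omega>) = (\<lambda>\<omega>. \<Sum>b\<in>Basis. (Y \<omega> \<bullet> b) * (Z \<omega> \<bullet> b))"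
    by (rule ext) (rule euclidean_inner)
  ultimately show ?thesis
    using int_coord by (simp add: Bochner_Integration.integral_sum)
qed

lemma integral_norm_sq_orthogonal_split:
  fixes X Y :: "'a \<Rightarrow> 'v::euclidean_space"
  assumes Q: "subalgebra M Q" and X: "X \<in> borel_measurable M" and Y: "Y \<in> borel_measurable Q"
    and int_X: "integrable M (\<lambda>\<omega>. (norm (X \<omega>))\<^sup>2)"
    and int_noise: "integrable M (\<lambda>\<omega>. (norm (X \<omega> - Y \<omega>))\<^sup>2)"
    and mean: "\<And>b. b \<in> Basis \<Longrightarrow> AE \<omega> in M. real_cond_exp M Q (\<lambda>\<omega>. (X \<omega> - Y \<omega>) \<bullet> b) \<omega> = 0"
  shows "(\<integral>\<omega>. (norm (X \<omega>))\<^sup>2 \<partial>M) = (\<integral>\<omega>. (norm (X \<omega> - Y \<omega>))\<^sup>2 \<partial>M) + (\<integral>\<omega>. (norm (Y \<omega>))\<^sup>2 \<partial>M)"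
proof -
  have Y_M: "Y \<in> borel_measurable M" by (rule measurable_from_subalg[OF Q Y])
  have int_Y: "integrable M (\<lambda>\<omega>. (norm (Y \<omega>))\<^sup>2)"
    using integrable_norm_sq_diff[of X M "\<lambda>\<omega>. X \<omega> - Y \<omega>"] X Y_M int_X int_noise by simp
  have "(\<lambda>\<omega>. Y \<omega> \<bullet> (X \<omega> - Y \<omega>))
      = (\<lambda>\<omega>. ((norm (X \<omega>))\<^sup>2 - (norm (Y \<omega>))\<^sup>2 - (norm (X \<omega> - Y \<omega>))\<^sup>2) / 2)"
    by (simp add: dot_norm)
  with integral_inner_cond_mean_zero[OF Q Y _ int_Y int_noise mean] X Y_M show ?thesis
    using int_X int_noise int_Y by simp
qed

lemma integral_le_of_real_cond_exp_le:
  assumes Q: "subalgebra M Q" and f: "integrable M f"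
    and le: "AE \<omega> in M. real_cond_exp M Q f \<omega> \<le> c"
  shows "(\<integral>\<omega>. f \<omega> \<partial>M) \<le> c"
proof -
  interpret finite_measure_subalgebra M Q
    by unfold_locales (rule Q)
  have "(\<integral>\<omega>. f \<omega> \<partial>M) = (\<integral>\<omega>. real_cond_exp M Q f \<omega> \<partial>M)"
    using real_cond_exp_int(2)[OF f] by simp
  also have "\<dots> \<le> (\<integral>\<omega>. c \<partial>M)"
    using f le by (intro integral_mono_AE real_cond_exp_int(1)) auto
  finally show ?thesis by (simp add: prob_space)
qed

end

locale favano_process =
  fixes M :: "'a measure" and n s K :: nat and eta :: real and w0 :: "'v::euclidean_space"
    and ht :: "nat \<Rightarrow> nat \<Rightarrow> nat \<Rightarrow> 'a \<Rightarrow> 'v"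
    and w :: "nat \<Rightarrow> 'a \<Rightarrow> 'v" and wl :: "nat \<Rightarrow> nat \<Rightarrow> 'a \<Rightarrow> 'v"
    and S :: "nat \<Rightarrow> 'a \<Rightarrow> nat set" and E :: "nat \<Rightarrow> nat \<Rightarrow> 'a \<Rightarrow> nat"
    and alpha :: "nat \<Rightarrow> nat \<Rightarrow> 'a \<Rightarrow> real"
  assumes w_0: "\<And>\<omega>. w 0 \<omega> = w0" and wl_0: "\<And>i \<omega>. wl i 0 \<omega> = w0"
    and w_step: "\<And>t \<omega>. 1 \<le> t \<Longrightarrow> w t \<omega> = (1 / real (s + 1)) *\<^sub>R
        (w (t - 1) \<omega> + (\<Sum>i\<in>S t \<omega>. wl i (t - 1) \<omega> - eta *\<^sub>R checkh K alpha E ht t i \<omega>))"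
    and wl_step: "\<And>t i \<omega>. 1 \<le> t \<Longrightarrow>
        wl i t \<omega> = (if i \<in> S t \<omega> then w t \<omega> else wl i (t - 1) \<omega>)"
    and ht_meas: "\<And>t i q. ht t i q \<in> borel_measurable M"
    and E_meas: "\<And>t i. E t i \<in> measurable M (count_space UNIV)"
    and S_meas: "\<And>t. S t \<in> measurable M (count_space UNIV)"
    and S_range: "\<And>t \<omega>. 1 \<le> t \<Longrightarrow> \<omega> \<in> space M \<Longrightarrow> S t \<omega> \<subseteq> {1..n} \<and> card (S t \<omega>) = s"
    and alpha_def:
      "(\<forall>t i \<omega>. alpha t i \<omega> =
           measure M {\<omega>' \<in> space M. 0 < E t i \<omega>'} * real (min (E t i \<omega>) K))
     \<or> (\<forall>t i \<omega>. alpha t i \<omega> = integral\<^sup>L M (\<lambda>\<omega>'. real (min (E t i \<omega>') K)))"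
begin

lemma alpha_measurable:
  assumes "E t i \<in> measurable F (count_space UNIV)"
  shows "alpha t i \<in> borel_measurable F"
  using alpha_def
proof
  assume "\<forall>t i \<omega>. alpha t i \<omega> =
      measure M {\<omega>' \<in> space M. 0 < E t i \<omega>'} * real (min (E t i \<omega>) K)"
  then have "alpha t i = (\<lambda>\<omega>. (\<lambda>k. measure M {\<omega>' \<in> space M. 0 < E t i \<omega>'} * real (min k K)) (E t i \<omega>))"
    by blast
  then show ?thesis
    by (simp add: measurable_compose_countable[OF _ assms, where f="\<lambda>k _. _ * real (min k K)"])
next
  assume "\<forall>t i \<omega>. alpha t i \<omega> = integral\<^sup>L M (\<lambda>\<omega>'. real (min (E t i \<omega>') K))"
  then have "alpha t i = (\<lambda>_. integral\<^sup>L M (\<lambda>\<omega>'. real (min (E t i \<omega>') K)))"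
    by blast
  then show ?thesis by simp
qed

lemma w_measurable_step:
  assumes space: "space F = space M" and r: "1 \<le> r"
    and S_F: "S r \<in> measurable F (count_space UNIV)"
    and E_F: "\<And>j. j \<in> {1..n} \<Longrightarrow> E r j \<in> measurable F (count_space UNIV)"
    and ht_F: "\<And>j q. j \<in> {1..n} \<Longrightarrow> 1 \<le> q \<Longrightarrow> ht r j q \<in> borel_measurable F"
    and prev: "w (r - 1) \<in> borel_measurable F" "\<And>j. wl j (r - 1) \<in> borel_measurable F"
  shows "w r \<in> borel_measurable F"
proof -
  let ?u = "\<lambda>j \<omega>. if j \<in> S r \<omega> then wl j (r - 1) \<omega> - eta *\<^sub>R checkh K alpha E ht r j \<omega> else 0"
  let ?W = "\<lambda>\<omega>. (1 / real (s + 1)) *\<^sub>R (w (r - 1) \<omega> + (\<Sum>j\<in>{1..n}. ?u j \<omega>))"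
  have u_F: "?u j \<in> borel_measurable F" if "j \<in> {1..n}" for j
  proof (rule measurable_If)
    have "checkh K alpha E ht r j \<in> borel_measurable F"
      using that by (simp add: checkh_measurable alpha_measurable E_F ht_F)
    then show "(\<lambda>\<omega>. wl j (r - 1) \<omega> - eta *\<^sub>R checkh K alpha E ht r j \<omega>) \<in> borel_measurable F"
      using prev(2) by simp
  qed (simp_all add: sets_Collect_mem_measurable[OF S_F])
  have "w r \<omega> = ?W \<omega>" if "\<omega> \<in> space F" for \<omega>
  proof -
    have "(\<Sum>j\<in>{1..n}. ?u j \<omega>)
        = (\<Sum>j\<in>{1..n} \<inter> S r \<omega>. wl j (r - 1) \<omega> - eta *\<^sub>R checkh K alpha E ht r j \<omega>)"
      by (rule sum.inter_restrict[symmetric]) simp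
    also have "{1..n} \<inter> S r \<omega> = S r \<omega>"
      using S_range[OF r, of \<omega>] that space by auto
    finally have "(\<Sum>j\<in>{1..n}. ?u j \<omega>)
        = (\<Sum>j\<in>S r \<omega>. wl j (r - 1) \<omega> - eta *\<^sub>R checkh K alpha E ht r j \<omega>)" .
    with w_step[OF r, of \<omega>] show ?thesis by (simp only:)
  qed
  moreover have "?W \<in> borel_measurable F"
    using prev(1) u_F by (intro borel_measurable_scaleR borel_measurable_add borel_measurable_sum
        borel_measurable_const)
  ultimately show ?thesis
    using measurable_cong[of F "w r" ?W] by blast
qed

lemma iterates_measurable:
  assumes space: "space F = space M"
    and S_F: "\<And>r. 1 \<le> r \<Longrightarrow> r \<le> T \<Longrightarrow> S r \<in> measurable F (count_space UNIV)"
    and E_F: "\<And>r j. 1 \<le> r \<Longrightarrow> r \<le> T \<Longrightarrow> j \<in> {1..n} \<Longrightarrow>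
        E r j \<in> measurable F (count_space UNIV)"
    and ht_F: "\<And>r j q. 1 \<le> r \<Longrightarrow> r \<le> T \<Longrightarrow> j \<in> {1..n} \<Longrightarrow> 1 \<le> q \<Longrightarrow>
        ht r j q \<in> borel_measurable F"
  shows "t \<le> T \<Longrightarrow> w t \<in> borel_measurable F \<and> (\<forall>i. wl i t \<in> borel_measurable F)"
proof (induction t)
  case 0
  show ?case by (simp add: w_0 wl_0)
next
  case (Suc t)
  then have IH: "w t \<in> borel_measurable F" "\<And>j. wl j t \<in> borel_measurable F" by auto
  have w_F: "w (Suc t) \<in> borel_measurable F"
    using Suc.prems IH by (intro w_measurable_step[OF space, of "Suc t"] S_F E_F ht_F) auto
  have "wl i (Suc t) \<in> borel_measurable F" for i
  proof -
    have "(\<lambda>\<omega>. if i \<in> S (Suc t) \<omega> then w (Suc t) \<omega> else wl i t \<omega>) \<in> borel_measurable F"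
      using w_F IH Suc.prems sets_Collect_mem_measurable[OF S_F] by (simp add: measurable_If)
    moreover have "wl i (Suc t) = (\<lambda>\<omega>. if i \<in> S (Suc t) \<omega> then w (Suc t) \<omega> else wl i t \<omega>)"
      using wl_step[of "Suc t" i] by auto
    ultimately show ?thesis by simp
  qed
  with w_F show ?case by blast
qed

lemma past_gen_subset_sets: "past_gen M n S E ht T \<subseteq> sets M"
  unfolding past_gen_def
  using rv_events_subset_sets[OF S_meas] rv_events_subset_sets[OF E_meas]
    rv_events_subset_sets[OF ht_meas]
  by blast

lemma query_sigma_subalgebra: "subalgebra M (query_sigma M n S E ht t i q)"
  unfolding query_sigma_def
  using past_gen_subset_sets rv_events_subset_sets[OF ht_meas]
  by (intro subalgebra_sigma) blast

lemma qpt_measurable_query_sigma: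
  "qpt eta wl ht (t + 1) i q \<in> borel_measurable (query_sigma M n S E ht (t + 1) i q)"
proof -
  define G where "G = past_gen M n S E ht (t + 1) \<union> (\<Union>r\<in>{1..<q}. rv_events M borel (ht (t + 1) i r))"
  have G: "G \<subseteq> Pow (space M)"
    unfolding G_def using past_gen_subset_sets rv_events_subset_sets[OF ht_meas]
      sets.sets_into_space by blast
  have Q: "query_sigma M n S E ht (t + 1) i q = sigma (space M) G"
    unfolding query_sigma_def G_def ..
  have "rv_events M (count_space UNIV) (S r) \<subseteq> G"
    and "j \<in> {1..n} \<Longrightarrow> rv_events M (count_space UNIV) (E r j) \<subseteq> G"
    and "j \<in> {1..n} \<Longrightarrow> 1 \<le> p \<Longrightarrow> rv_events M borel (ht r j p) \<subseteq> G"
    if "1 \<le> r" "r \<le> t" for r j p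
    using that unfolding G_def past_gen_def by auto
  then have "wl i t \<in> borel_measurable (sigma (space M) G)"
    using G by (intro iterates_measurable[THEN conjunct2, rule_format, of _ t]
        measurable_sigma_of_rv_events S_meas E_meas ht_meas) auto
  moreover have "ht (t + 1) i r \<in> borel_measurable (sigma (space M) G)" if "r \<in> {1..<q}" for r
    using that G unfolding G_def by (intro measurable_sigma_of_rv_events[OF ht_meas]) auto
  ultimately show ?thesis
    unfolding Q qpt_def[abs_def] by simp
qed

end

locale favano = favano_process M n s K eta w0 ht w wl S E alpha + prob_space M
  for M :: "'a measure" and n s K :: nat and eta :: real and w0 :: "'v::euclidean_space"
    and ht w wl S E alpha +
  fixes L sigma :: real and g :: "nat \<Rightarrow> 'v \<Rightarrow> 'v"
  assumes K_ge_1: "1 \<le> K" and eta_pos: "0 < eta" and L_pos: "0 < L"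
    and lip: "\<And>i x y. i \<in> {1..n} \<Longrightarrow> norm (g i x - g i y) \<le> L * norm (x - y)"
    and eta_small: "eta < 1 / (4 * L * real K ^ 2)"
    and noise_int: "\<And>t i q. 1 \<le> t \<Longrightarrow> i \<in> {1..n} \<Longrightarrow> 1 \<le> q \<Longrightarrow>
        integrable M (\<lambda>\<omega>. (norm (ht t i q \<omega> - g i (qpt eta wl ht t i q \<omega>)))\<^sup>2)"
    and noise_mean: "\<And>t i q b. 1 \<le> t \<Longrightarrow> i \<in> {1..n} \<Longrightarrow> 1 \<le> q \<Longrightarrow> b \<in> Basis \<Longrightarrow>
        AE \<omega> in M. real_cond_exp M (query_sigma M n S E ht t i q)
          (\<lambda>\<omega>. (ht t i q \<omega> - g i (qpt eta wl ht t i q \<omega>)) \<bullet> b) \<omega> = 0"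
    and noise_var: "\<And>t i q. 1 \<le> t \<Longrightarrow> i \<in> {1..n} \<Longrightarrow> 1 \<le> q \<Longrightarrow>
        AE \<omega> in M. real_cond_exp M (query_sigma M n S E ht t i q)
          (\<lambda>\<omega>. (norm (ht t i q \<omega> - g i (qpt eta wl ht t i q \<omega>)))\<^sup>2) \<omega> \<le> sigma\<^sup>2"
    and int_h: "\<And>t i q. integrable M (\<lambda>\<omega>. (norm (ht t i q \<omega>))\<^sup>2)"
    and int_dev: "\<And>t i. integrable M (\<lambda>\<omega>. (norm (wl i t \<omega> - mu n w wl t \<omega>))\<^sup>2)"
    and int_grad: "\<And>t i. integrable M (\<lambda>\<omega>. (norm (g i (mu n w wl t \<omega>)))\<^sup>2)"
begin

lemma continuous_on_g: "i \<in> {1..n} \<Longrightarrow> continuous_on UNIV (g i)"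
  using L_pos lip by (intro lipschitz_on_continuous_on[of L]) (auto simp: lipschitz_on_def dist_norm)

lemma integral_norm_sq_grad_query_le:
  assumes i: "i \<in> {1..n}"
  shows "(\<integral>\<omega>. (norm (g i (qpt eta wl ht (t + 1) i q \<omega>)))\<^sup>2 \<partial>M)
    \<le> 3 * L\<^sup>2 * (\<integral>\<omega>. (norm (wl i t \<omega> - mu n w wl t \<omega>))\<^sup>2 \<partial>M)
      + 3 * L\<^sup>2 * eta\<^sup>2 * (real (q - 1) * (\<Sum>r\<in>{1..<q}. \<integral>\<omega>. (norm (ht (t + 1) i r \<omega>))\<^sup>2 \<partial>M))
      + 3 * (\<integral>\<omega>. (norm (g i (mu n w wl t \<omega>)))\<^sup>2 \<partial>M)"
proof -
  let ?Y = "\<lambda>\<omega>. (norm (g i (qpt eta wl ht (t + 1) i q \<omega>)))\<^sup>2"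
  let ?R = "\<lambda>\<omega>. 3 * L\<^sup>2 * (norm (wl i t \<omega> - mu n w wl t \<omega>))\<^sup>2
      + 3 * L\<^sup>2 * eta\<^sup>2 * (real (q - 1) * (\<Sum>r\<in>{1..<q}. (norm (ht (t + 1) i r \<omega>))\<^sup>2))
      + 3 * (norm (g i (mu n w wl t \<omega>)))\<^sup>2"
  have pointwise: "?Y \<omega> \<le> ?R \<omega>" for \<omega>
    using norm_sq_lipschitz_perturbed_le[OF lip[OF i] less_imp_le[OF L_pos] less_imp_le[OF eta_pos],
        of "wl i t \<omega>" "\<lambda>r. ht (t + 1) i r \<omega>" "{1..<q}" "mu n w wl t \<omega>"]
    by (simp add: qpt_def)
  have int_R: "integrable M ?R"
    using int_dev int_grad int_h by simp
  have "qpt eta wl ht (t + 1) i q \<in> borel_measurable M"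
    by (rule measurable_from_subalg[OF query_sigma_subalgebra qpt_measurable_query_sigma])
  then have "(\<lambda>\<omega>. g i (qpt eta wl ht (t + 1) i q \<omega>)) \<in> borel_measurable M"
    by (rule borel_measurable_continuous_on[OF continuous_on_g[OF i]])
  then have "?Y \<in> borel_measurable M"
    by simp
  moreover have "AE \<omega> in M. norm (?Y \<omega>) \<le> norm (?R \<omega>)"
    using pointwise by (intro AE_I2) (auto intro: order_trans[OF _ abs_ge_self])
  ultimately have int_Y: "integrable M ?Y"
    by (rule Bochner_Integration.integrable_bound[OF int_R])
  have "(\<integral>\<omega>. ?Y \<omega> \<partial>M) \<le> (\<integral>\<omega>. ?R \<omega> \<partial>M)"
    using pointwise by (intro integral_mono[OF int_Y int_R])
  also have "\<dots> = 3 * L\<^sup>2 * (\<integral>\<omega>. (norm (wl i t \<omega> - mu n w wl t \<omega>))\<^sup>2 \<partial>M)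
      + 3 * L\<^sup>2 * eta\<^sup>2 * (real (q - 1) * (\<Sum>r\<in>{1..<q}. \<integral>\<omega>. (norm (ht (t + 1) i r \<omega>))\<^sup>2 \<partial>M))
      + 3 * (\<integral>\<omega>. (norm (g i (mu n w wl t \<omega>)))\<^sup>2 \<partial>M)"
    using int_dev int_grad int_h by (simp add: Bochner_Integration.integral_sum)
  finally show ?thesis .
qed

lemma second_moment_step:
  fixes i t q :: nat
  defines "A \<equiv> sigma\<^sup>2 + (sigma\<^sup>2 / real K ^ 2
      + 16 * L\<^sup>2 * (\<integral>\<omega>. (norm (wl i t \<omega> - mu n w wl t \<omega>))\<^sup>2 \<partial>M)
      + 8 * (\<integral>\<omega>. (norm (g i (mu n w wl t \<omega>)))\<^sup>2 \<partial>M))"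
  assumes i: "i \<in> {1..n}" and q: "q \<in> {1..K}"
    and IH: "\<And>r. r \<in> {1..<q} \<Longrightarrow> (\<integral>\<omega>. (norm (ht (t + 1) i r \<omega>))\<^sup>2 \<partial>M) \<le> A"
  shows "(\<integral>\<omega>. (norm (ht (t + 1) i q \<omega>))\<^sup>2 \<partial>M) \<le> A"
proof -
  let ?Q = "query_sigma M n S E ht (t + 1) i q"
  let ?Y = "\<lambda>\<omega>. g i (qpt eta wl ht (t + 1) i q \<omega>)"
  let ?D = "\<integral>\<omega>. (norm (wl i t \<omega> - mu n w wl t \<omega>))\<^sup>2 \<partial>M"
  let ?G = "\<integral>\<omega>. (norm (g i (mu n w wl t \<omega>)))\<^sup>2 \<partial>M"
  have t: "1 \<le> t + 1" and q1: "1 \<le> q" using q by auto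
  have Y: "?Y \<in> borel_measurable ?Q"
    by (rule borel_measurable_continuous_on[OF continuous_on_g[OF i] qpt_measurable_query_sigma])
  have split: "(\<integral>\<omega>. (norm (ht (t + 1) i q \<omega>))\<^sup>2 \<partial>M)
      = (\<integral>\<omega>. (norm (ht (t + 1) i q \<omega> - ?Y \<omega>))\<^sup>2 \<partial>M) + (\<integral>\<omega>. (norm (?Y \<omega>))\<^sup>2 \<partial>M)"
    by (rule integral_norm_sq_orthogonal_split[OF query_sigma_subalgebra ht_meas Y int_h
          noise_int[OF t i q1] noise_mean[OF t i q1]])
  have noise: "(\<integral>\<omega>. (norm (ht (t + 1) i q \<omega> - ?Y \<omega>))\<^sup>2 \<partial>M) \<le> sigma\<^sup>2"
    by (rule integral_le_of_real_cond_exp_le[OF query_sigma_subalgebra noise_int[OF t i q1]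
          noise_var[OF t i q1]])
  have "(\<Sum>r\<in>{1..<q}. \<integral>\<omega>. (norm (ht (t + 1) i r \<omega>))\<^sup>2 \<partial>M) \<le> real (q - 1) * A"
    using sum_bounded_above[of "{1..<q}", OF IH] by simp
  then have "3 * L\<^sup>2 * eta\<^sup>2 * (real (q - 1) * (\<Sum>r\<in>{1..<q}. \<integral>\<omega>. (norm (ht (t + 1) i r \<omega>))\<^sup>2 \<partial>M))
      \<le> 3 * L\<^sup>2 * eta\<^sup>2 * (real (q - 1) * (real (q - 1) * A))"
    by (intro mult_left_mono) auto
  then have drift: "(\<integral>\<omega>. (norm (?Y \<omega>))\<^sup>2 \<partial>M)
      \<le> 3 * L\<^sup>2 * ?D + 3 * L\<^sup>2 * eta\<^sup>2 * (real (q - 1) * (real (q - 1) * A)) + 3 * ?G"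
    using integral_norm_sq_grad_query_le[OF i, of t q] by linarith
  have "A - sigma\<^sup>2 = sigma\<^sup>2 / real K ^ 2 + 16 * L\<^sup>2 * ?D + 8 * ?G"
    unfolding A_def by simp
  moreover have "0 \<le> ?D" "0 \<le> ?G" by (auto intro: integral_nonneg_AE)
  ultimately have "3 * L\<^sup>2 * ?D + 3 * L\<^sup>2 * eta\<^sup>2 * (real (q - 1) * (real (q - 1)
      * (sigma\<^sup>2 + (A - sigma\<^sup>2)))) + 3 * ?G \<le> A - sigma\<^sup>2"
    using K_ge_1 L_pos eta_pos eta_small q by (intro step_size_closes_recursion) auto
  with split noise drift show ?thesis
    by simp
qed

lemma second_moment_bound:
  assumes "i \<in> {1..n}" and "q \<in> {1..K}"
  shows "(\<integral>\<omega>. (norm (ht (t + 1) i q \<omega>))\<^sup>2 \<partial>M) \<le> sigma\<^sup>2 + (sigma\<^sup>2 / real K ^ 2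
      + 16 * L\<^sup>2 * (\<integral>\<omega>. (norm (wl i t \<omega> - mu n w wl t \<omega>))\<^sup>2 \<partial>M)
      + 8 * (\<integral>\<omega>. (norm (g i (mu n w wl t \<omega>)))\<^sup>2 \<partial>M))"
  using assms(2)
proof (induction q rule: less_induct)
  case (less q)
  show ?case
    by (rule second_moment_step) (use assms(1) less in auto)
qed

end

theorem mainTheorem6:
  fixes M :: "'a measure"
    and n s K :: nat and eta L sigma :: real
    and f :: "nat \<Rightarrow> 'v::euclidean_space \<Rightarrow> real" and g :: "nat \<Rightarrow> 'v \<Rightarrow> 'v"
    and F :: "'v \<Rightarrow> real" and w0 :: 'v
    and ht :: "nat \<Rightarrow> nat \<Rightarrow> nat \<Rightarrow> 'a \<Rightarrow> 'v"
    and w :: "nat \<Rightarrow> 'a \<Rightarrow> 'v" and wl :: "nat \<Rightarrow> nat \<Rightarrow> 'a \<Rightarrow> 'v"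
    and S :: "nat \<Rightarrow> 'a \<Rightarrow> nat set" and E :: "nat \<Rightarrow> nat \<Rightarrow> 'a \<Rightarrow> nat"
    and alpha :: "nat \<Rightarrow> nat \<Rightarrow> 'a \<Rightarrow> real"
  assumes P: "prob_space M"
    and n: "1 \<le> n" and s: "1 \<le> s" "s \<le> n" and K: "1 \<le> K" and eta: "0 < eta"
    \<comment> \<open>g i is the gradient of the differentiable f i; F is the average\<close>
    and grad: "\<And>i x. i \<in> {1..n} \<Longrightarrow> (f i has_derivative (\<lambda>h. g i x \<bullet> h)) (at x)"
    and Fdef: "\<And>x. F x = (1 / real n) * (\<Sum>i\<in>{1..n}. f i x)"
    \<comment> \<open>process\<close>
    and w_0: "\<And>\<omega>. w 0 \<omega> = w0" and wl_0: "\<And>i \<omega>. wl i 0 \<omega> = w0"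
    and w_step: "\<And>t \<omega>. 1 \<le> t \<Longrightarrow> w t \<omega> = (1 / real (s + 1)) *\<^sub>R
        (w (t - 1) \<omega> + (\<Sum>i\<in>S t \<omega>. wl i (t - 1) \<omega> - eta *\<^sub>R checkh K alpha E ht t i \<omega>))"
    and wl_step: "\<And>t i \<omega>. 1 \<le> t \<Longrightarrow>
        wl i t \<omega> = (if i \<in> S t \<omega> then w t \<omega> else wl i (t - 1) \<omega>)"
    \<comment> \<open>random quantities and their laws\<close>
    and ht_meas: "\<And>t i q. ht t i q \<in> borel_measurable M"
    and E_meas: "\<And>t i. E t i \<in> measurable M (count_space UNIV)"
    and S_meas: "\<And>t. S t \<in> measurable M (count_space UNIV)"
    and E_pos: "\<And>t i. 1 \<le> t \<Longrightarrow> i \<in> {1..n} \<Longrightarrow>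
        measure M {\<omega> \<in> space M. 0 < E t i \<omega>} > 0"
    and S_range: "\<And>t \<omega>. 1 \<le> t \<Longrightarrow> \<omega> \<in> space M \<Longrightarrow> S t \<omega> \<subseteq> {1..n} \<and> card (S t \<omega>) = s"
    and S_unif: "\<And>t A. 1 \<le> t \<Longrightarrow> A \<subseteq> {1..n} \<Longrightarrow> card A = s \<Longrightarrow>
        measure M {\<omega> \<in> space M. S t \<omega> = A} = 1 / real (n choose s)"
    and indep_new: "\<And>t. 1 \<le> t \<Longrightarrow> prob_space.indep_set M
        (sigma_sets (space M) (rv_events M (count_space UNIV) (S t)
            \<union> (\<Union>j\<in>{1..n}. rv_events M (count_space UNIV) (E t j))))
        (sigma_sets (space M) (past_gen M n S E ht t
            \<union> (\<Union>j\<in>{1..n}. \<Union>q\<in>{1..}. rv_events M borel (ht t j q))))"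
    and indep_SE: "\<And>t. 1 \<le> t \<Longrightarrow> prob_space.indep_set M
        (sigma_sets (space M) (rv_events M (count_space UNIV) (S t)))
        (sigma_sets (space M) (\<Union>j\<in>{1..n}. rv_events M (count_space UNIV) (E t j)))"
    and alpha_def:
      "(\<forall>t i \<omega>. alpha t i \<omega> =
           measure M {\<omega>' \<in> space M. 0 < E t i \<omega>'} * real (min (E t i \<omega>) K))
     \<or> (\<forall>t i \<omega>. alpha t i \<omega> = integral\<^sup>L M (\<lambda>\<omega>'. real (min (E t i \<omega>') K)))"
    \<comment> \<open>stochastic oracle: conditionally unbiased noise with bounded conditional variance\<close>
    and noise_int: "\<And>t i q. 1 \<le> t \<Longrightarrow> i \<in> {1..n} \<Longrightarrow> 1 \<le> q \<Longrightarrow>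
        integrable M (\<lambda>\<omega>. (norm (ht t i q \<omega> - g i (qpt eta wl ht t i q \<omega>)))\<^sup>2)"
    and noise_mean: "\<And>t i q b. 1 \<le> t \<Longrightarrow> i \<in> {1..n} \<Longrightarrow> 1 \<le> q \<Longrightarrow> b \<in> Basis \<Longrightarrow>
        AE \<omega> in M. real_cond_exp M (query_sigma M n S E ht t i q)
          (\<lambda>\<omega>. (ht t i q \<omega> - g i (qpt eta wl ht t i q \<omega>)) \<bullet> b) \<omega> = 0"
    and noise_var: "\<And>t i q. 1 \<le> t \<Longrightarrow> i \<in> {1..n} \<Longrightarrow> 1 \<le> q \<Longrightarrow>
        AE \<omega> in M. real_cond_exp M (query_sigma M n S E ht t i q)
          (\<lambda>\<omega>. (norm (ht t i q \<omega> - g i (qpt eta wl ht t i q \<omega>)))\<^sup>2) \<omega> \<le> sigma\<^sup>2"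
    \<comment> \<open>finiteness of the expectations appearing\<close>
    and int_h: "\<And>t i q. integrable M (\<lambda>\<omega>. (norm (ht t i q \<omega>))\<^sup>2)"
    and int_dev: "\<And>t i. integrable M (\<lambda>\<omega>. (norm (wl i t \<omega> - mu n w wl t \<omega>))\<^sup>2)"
    and int_grad: "\<And>t i. integrable M (\<lambda>\<omega>. (norm (g i (mu n w wl t \<omega>)))\<^sup>2)"
    \<comment> \<open>smoothness and step size\<close>
    and L: "0 < L"
    and lip: "\<And>i x y. i \<in> {1..n} \<Longrightarrow> norm (g i x - g i y) \<le> L * norm (x - y)"
    and eta_small: "eta < 1 / (4 * L * real K ^ 2)"
  shows "\<forall>q \<in> {1..K}. \<forall>i \<in> {1..n}. \<forall>t.
    integral\<^sup>L M (\<lambda>\<omega>. (norm (ht (t + 1) i q \<omega>))\<^sup>2)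
      \<le> sigma\<^sup>2 + (sigma\<^sup>2 / real K ^ 2
          + 16 * L\<^sup>2 * integral\<^sup>L M (\<lambda>\<omega>. (norm (wl i t \<omega> - mu n w wl t \<omega>))\<^sup>2)
          + 8 * integral\<^sup>L M (\<lambda>\<omega>. (norm (g i (mu n w wl t \<omega>)))\<^sup>2))"
proof -
  interpret favano M n s K eta w0 ht w wl S E alpha L sigma g
    by (intro favano.intro favano_process.intro favano_axioms.intro P) (fact assms)+
  show ?thesis
    by (intro ballI allI second_moment_bound)
qed

end
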